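(* Let $(\Omega,\Sigma,\mu;\phi)$ be a bimeasurable measure preserving dynamical system such that for every $A\in\Sigma$ the sequence $(\phi^n(A))_{n\in\mathbb{N}}$ converges in the measure algebra $\Sigma/\sim$. Then $\Sigma_\infty\subseteq\overline{\Sigma_{\mathrm{inv}}}$.
   Context: A measure preserving dynamical system $(\Omega,\Sigma,\mu;\phi)$ is a probability space with a measurable map $\phi\colon\Omega\to\Omega$ such that $\mu(\phi^{-1}(A))=\mu(A)$ for all $A\in\Sigma$; it is bimeasurable if $\phi^{-1}(A),\phi(A)\in\Sigma$ for all $A\in\Sigma$. $A\sim B$ iff $\mu(A\triangle B)=0$; $\Sigma/\sim$ is the set of equivalence classes with metric $d(A,B)=\mu(A\triangle B)$. $\Sigma_n=\{\phi^{-n}(A):A\in\Sigma\}$, $\Sigma_\infty=\bigcap_{n\in\mathbb{N}}\Sigma_n$, $\Sigma_{\mathrm{inv}}=\{A\in\Sigma:\phi^{-1}(A)=A\}$, and $\overline{\Sigma_{\mathrm{inv}}}=\{A\in\Sigma:\exists B\in\Sigma_{\mathrm{inv}},\ \mu(A\triangle B)=0\}$. *)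

theory Defs
  imports "HOL-Probability.Probability"
begin

definition mpds :: "'a measure \<Rightarrow> ('a \<Rightarrow> 'a) \<Rightarrow> bool" where
  "mpds M \<phi> \<longleftrightarrow> prob_space M \<and> \<phi> \<in> measurable M M \<and>
     (\<forall>A\<in>sets M. emeasure M (\<phi> -` A \<inter> space M) = emeasure M A)"

definition bimeasurable :: "'a measure \<Rightarrow> ('a \<Rightarrow> 'a) \<Rightarrow> bool" where
  "bimeasurable M \<phi> \<longleftrightarrow> (\<forall>A\<in>sets M. \<phi> -` A \<inter> space M \<in> sets M \<and> \<phi> ` A \<in> sets M)"

definition symdiff :: "'a set \<Rightarrow> 'a set \<Rightarrow> 'a set" where
  "symdiff A B = (A - B) \<union> (B - A)"

text \<open>Convergence in the measure algebra Sigma/~ with metric d(A,B) = mu(A symdiff B).\<close>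
definition converges_measure_algebra :: "'a measure \<Rightarrow> (nat \<Rightarrow> 'a set) \<Rightarrow> bool" where
  "converges_measure_algebra M S \<longleftrightarrow>
     (\<exists>B\<in>sets M. (\<lambda>n. measure M (symdiff (S n) B)) \<longlonglongrightarrow> 0)"

definition Sigma_n :: "'a measure \<Rightarrow> ('a \<Rightarrow> 'a) \<Rightarrow> nat \<Rightarrow> 'a set set" where
  "Sigma_n M \<phi> n = {(\<phi> ^^ n) -` A \<inter> space M | A. A \<in> sets M}"

definition Sigma_infty :: "'a measure \<Rightarrow> ('a \<Rightarrow> 'a) \<Rightarrow> 'a set set" where
  "Sigma_infty M \<phi> = (\<Inter>n. Sigma_n M \<phi> n)"

definition Sigma_inv :: "'a measure \<Rightarrow> ('a \<Rightarrow> 'a) \<Rightarrow> 'a set set" where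
  "Sigma_inv M \<phi> = {A \<in> sets M. \<phi> -` A \<inter> space M = A}"

definition Sigma_inv_closure :: "'a measure \<Rightarrow> ('a \<Rightarrow> 'a) \<Rightarrow> 'a set set" where
  "Sigma_inv_closure M \<phi> = {A \<in> sets M. \<exists>B\<in>Sigma_inv M \<phi>. measure M (symdiff A B) = 0}"

end

theory Submission
  imports Defs
begin

text \<open>Write \<open>\<phi>\<^sup>-\<^sup>n\<close> for pulling sets back along \<open>\<phi> ^^ n\<close> and \<open>I\<^sub>n = \<phi>\<^sup>n(A)\<close>.
  For \<open>A \<in> \<Sigma>\<^sub>\<infinity>\<close> one has \<open>\<phi>\<^sup>-\<^sup>n(I\<^sub>n) = A\<close>, hence \<open>\<phi>\<^sup>-\<^sup>1(I\<^sub>n\<^sub>+\<^sub>1) = I\<^sub>n\<close> up to a null set,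
  because \<open>\<phi>\<^sup>-\<^sup>n\<close> is an isometry of the measure algebra. Passing to the limit \<open>C\<close> of \<open>I\<^sub>n\<close>
  gives \<open>\<phi>\<^sup>-\<^sup>1(C) \<sim> C\<close>, and then \<open>d(A, C) \<le> d(A, \<phi>\<^sup>-\<^sup>n C) + d(\<phi>\<^sup>-\<^sup>n C, C) = d(I\<^sub>n, C) \<longrightarrow> 0\<close>.
  Finally the almost invariant set \<open>C\<close> differs by a null set from the invariant set of
  points whose orbit eventually stays in \<open>C\<close>.\<close>

definition ma_dist :: "'a measure \<Rightarrow> 'a set \<Rightarrow> 'a set \<Rightarrow> real" where
  "ma_dist M X Y = measure M (symdiff X Y)"

lemma sets_symdiff: "X \<in> sets M \<Longrightarrow> Y \<in> sets M \<Longrightarrow> symdiff X Y \<in> sets M"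
  unfolding symdiff_def by auto

lemma ma_dist_nonneg: "0 \<le> ma_dist M X Y"
  by (simp add: ma_dist_def)

lemma ma_dist_commute: "ma_dist M X Y = ma_dist M Y X"
  by (simp add: ma_dist_def symdiff_def Un_commute)

lemma ma_dist_self: "ma_dist M X X = 0"
  by (simp add: ma_dist_def symdiff_def)

lemma ma_dist_eq_0_if_le_null_sequence:
  assumes "\<And>n. ma_dist M X Y \<le> f n" and "f \<longlonglongrightarrow> 0"
  shows "ma_dist M X Y = 0"
  using LIMSEQ_le_const[OF assms(2)] assms(1) ma_dist_nonneg by (meson antisym)

lemma (in finite_measure) ma_dist_triangle:
  assumes "X \<in> sets M" "Y \<in> sets M" "Z \<in> sets M"
  shows "ma_dist M X Z \<le> ma_dist M X Y + ma_dist M Y Z"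
proof -
  have "measure M (symdiff X Z) \<le> measure M (symdiff X Y \<union> symdiff Y Z)"
    by (rule finite_measure_mono) (auto simp: symdiff_def intro: assms)
  also have "\<dots> \<le> measure M (symdiff X Y) + measure M (symdiff Y Z)"
    by (rule measure_subadditive) (auto intro: sets_symdiff assms)
  finally show ?thesis
    unfolding ma_dist_def .
qed

lemma (in finite_measure) ma_dist_eq_0_trans:
  assumes "X \<in> sets M" "Y \<in> sets M" "Z \<in> sets M" "ma_dist M X Y = 0" "ma_dist M Y Z = 0"
  shows "ma_dist M X Z = 0"
  using ma_dist_triangle[OF assms(1-3)] assms(4,5) ma_dist_nonneg by (metis add_0 antisym)

lemma (in finite_measure) ma_dist_eq_0_iff_null_set:
  "X \<in> sets M \<Longrightarrow> Y \<in> sets M \<Longrightarrow> ma_dist M X Y = 0 \<longleftrightarrow> symdiff X Y \<in> null_sets M"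
  by (simp add: ma_dist_def emeasure_eq_measure null_sets_def sets_symdiff)

lemma sets_image_funpow:
  assumes "bimeasurable M \<phi>" and "A \<in> sets M"
  shows "(\<phi> ^^ n) ` A \<in> sets M"
proof (induction n)
  case 0
  then show ?case using assms(2) by simp
next
  case (Suc n)
  have "(\<phi> ^^ Suc n) ` A = \<phi> ` ((\<phi> ^^ n) ` A)"
    by (simp add: image_comp)
  then show ?case
    using Suc assms(1) unfolding bimeasurable_def by auto
qed

locale measure_preserving_map = finite_measure M for M :: "'a measure" +
  fixes \<phi> :: "'a \<Rightarrow> 'a"
  assumes measurable_map: "\<phi> \<in> M \<rightarrow>\<^sub>M M"
    and emeasure_vimage: "\<And>A. A \<in> sets M \<Longrightarrow> emeasure M (\<phi> -` A \<inter> space M) = emeasure M A"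
begin

definition pull :: "nat \<Rightarrow> 'a set \<Rightarrow> 'a set" where
  "pull n X = (\<phi> ^^ n) -` X \<inter> space M"

lemma measurable_funpow: "\<phi> ^^ n \<in> M \<rightarrow>\<^sub>M M"
proof (induction n)
  case (Suc n)
  then show ?case
    using measurable_comp[OF Suc measurable_map] by (simp add: comp_def)
qed simp

lemma sets_pull: "X \<in> sets M \<Longrightarrow> pull n X \<in> sets M"
  unfolding pull_def using measurable_funpow by (rule measurable_sets)

lemma pull_0: "X \<in> sets M \<Longrightarrow> pull 0 X = X"
  using sets.sets_into_space by (auto simp: pull_def)

lemma pull_Suc: "pull (Suc n) X = pull n (\<phi> -` X \<inter> space M)"
  using measurable_space[OF measurable_funpow]
  by (auto simp: pull_def funpow_Suc_right)

lemma pull_symdiff: "pull n (symdiff X Y) = symdiff (pull n X) (pull n Y)"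
  by (auto simp: pull_def symdiff_def)

lemma measure_pull: "X \<in> sets M \<Longrightarrow> measure M (pull n X) = measure M X"
proof (induction n arbitrary: X)
  case 0
  then show ?case by (simp add: pull_0)
next
  case (Suc n)
  have "measure M (pull (Suc n) X) = measure M (\<phi> -` X \<inter> space M)"
    using Suc.IH[OF measurable_sets[OF measurable_map Suc.prems]] by (simp add: pull_Suc)
  also have "\<dots> = measure M X"
    using emeasure_vimage[OF Suc.prems] by (simp add: measure_def)
  finally show ?case .
qed

lemma ma_dist_pull: "X \<in> sets M \<Longrightarrow> Y \<in> sets M \<Longrightarrow> ma_dist M (pull n X) (pull n Y) = ma_dist M X Y"
  by (simp add: ma_dist_def pull_symdiff[symmetric] measure_pull sets_symdiff)

lemma ma_dist_pull_eq_0: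
  assumes "C \<in> sets M" and "ma_dist M (\<phi> -` C \<inter> space M) C = 0"
  shows "ma_dist M (pull n C) C = 0"
proof (induction n)
  case 0
  then show ?case by (simp add: pull_0 assms(1) ma_dist_self)
next
  case (Suc n)
  have "ma_dist M (pull (Suc n) C) (pull n C) = 0"
    using assms ma_dist_pull[of "\<phi> -` C \<inter> space M" C n] measurable_sets[OF measurable_map]
    by (simp add: pull_Suc)
  then show ?case
    using Suc assms(1) ma_dist_eq_0_trans sets_pull by blast
qed

lemma almost_invariant_imp_ex_invariant:
  assumes C: "C \<in> sets M" and "ma_dist M (\<phi> -` C \<inter> space M) C = 0"
  shows "\<exists>D\<in>Sigma_inv M \<phi>. ma_dist M C D = 0"
proof
  define D where "D = {x \<in> space M. eventually (\<lambda>n. (\<phi> ^^ n) x \<in> C) sequentially}"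
  have "D = (\<Union>m. \<Inter>n\<in>{m..}. pull n C)"
    by (auto simp: D_def pull_def eventually_sequentially)
  then have D_sets: "D \<in> sets M"
    by (auto intro: sets_pull C)
  have "eventually (\<lambda>n. (\<phi> ^^ n) (\<phi> x) \<in> C) sequentially
      \<longleftrightarrow> eventually (\<lambda>n. (\<phi> ^^ n) x \<in> C) sequentially" for x
    using eventually_sequentially_Suc[of "\<lambda>n. (\<phi> ^^ n) x \<in> C"]
    by (simp only: funpow_Suc_right comp_apply)
  then have "\<phi> -` D \<inter> space M = D"
    using measurable_space[OF measurable_map] by (auto simp: D_def)
  then show "D \<in> Sigma_inv M \<phi>"
    using D_sets by (simp add: Sigma_inv_def)
  have "symdiff C D \<subseteq> (\<Union>n. symdiff (pull n C) C)"
    using sets.sets_into_space[OF C]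
    by (auto simp: symdiff_def D_def pull_def eventually_sequentially)
  moreover have "(\<Union>n. symdiff (pull n C) C) \<in> null_sets M"
    using ma_dist_pull_eq_0[OF assms] C
    by (intro null_sets_UN) (simp add: ma_dist_eq_0_iff_null_set sets_pull)
  ultimately show "ma_dist M C D = 0"
    using C D_sets by (simp add: ma_dist_eq_0_iff_null_set null_sets_subset sets_symdiff)
qed

lemma ma_dist_vimage:
  "X \<in> sets M \<Longrightarrow> Y \<in> sets M \<Longrightarrow> ma_dist M (\<phi> -` X \<inter> space M) (\<phi> -` Y \<inter> space M) = ma_dist M X Y"
  using ma_dist_pull[of X Y 1] by (simp add: pull_def)

lemma pull_image_pull: "pull n ((\<phi> ^^ n) ` pull n B) = pull n B"
  by (auto simp: pull_def)

lemma Sigma_infty_eq_pull_image: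
  assumes "A \<in> Sigma_infty M \<phi>"
  shows "pull n ((\<phi> ^^ n) ` A) = A"
proof -
  obtain B where "A = pull n B"
    using assms unfolding Sigma_infty_def Sigma_n_def pull_def by blast
  then show ?thesis
    by (simp add: pull_image_pull)
qed

lemma Sigma_infty_sets: "A \<in> Sigma_infty M \<phi> \<Longrightarrow> A \<in> sets M"
  by (auto simp: Sigma_infty_def Sigma_n_def intro: measurable_sets[OF measurable_funpow])

lemma limit_of_pushforwards_almost_invariant:
  assumes I: "\<And>n. I n \<in> sets M" and pull_I: "\<And>n. pull n (I n) = A"
    and C: "C \<in> sets M" and lim: "(\<lambda>n. ma_dist M (I n) C) \<longlonglongrightarrow> 0"
  shows "ma_dist M (\<phi> -` C \<inter> space M) C = 0"
proof (rule ma_dist_eq_0_if_le_null_sequence)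
  show "(\<lambda>n. ma_dist M (I (Suc n)) C + ma_dist M (I n) C) \<longlonglongrightarrow> 0"
    using tendsto_add[OF LIMSEQ_Suc[OF lim] lim] by simp
next
  fix n
  let ?pre = "\<lambda>X. \<phi> -` X \<inter> space M"
  have pre_sets: "?pre X \<in> sets M" if "X \<in> sets M" for X
    using measurable_sets[OF measurable_map that] .
  \<comment> \<open>\<open>\<phi>\<^sup>-\<^sup>1(I\<^sub>n\<^sub>+\<^sub>1)\<close> and \<open>I\<^sub>n\<close> have the same image \<open>A\<close> under the isometry \<open>pull n\<close>.\<close>
  have "ma_dist M (pull n (?pre (I (Suc n)))) (pull n (I n)) = 0"
    using pull_I[of "Suc n"] pull_I[of n] by (simp add: pull_Suc ma_dist_self)
  then have shift: "ma_dist M (?pre (I (Suc n))) (I n) = 0"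
    using ma_dist_pull I pre_sets by metis
  have "ma_dist M (?pre C) C \<le> ma_dist M (?pre C) (?pre (I (Suc n))) + ma_dist M (?pre (I (Suc n))) C"
    by (intro ma_dist_triangle pre_sets C I)
  also have "ma_dist M (?pre (I (Suc n))) C \<le> ma_dist M (?pre (I (Suc n))) (I n) + ma_dist M (I n) C"
    by (intro ma_dist_triangle pre_sets C I)
  finally show "ma_dist M (?pre C) C \<le> ma_dist M (I (Suc n)) C + ma_dist M (I n) C"
    using shift C I by (simp add: ma_dist_vimage ma_dist_commute)
qed

lemma limit_of_pushforwards_Sigma_inv_closure:
  assumes I: "\<And>n. I n \<in> sets M" and pull_I: "\<And>n. pull n (I n) = A"
    and C: "C \<in> sets M" and lim: "(\<lambda>n. ma_dist M (I n) C) \<longlonglongrightarrow> 0"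
  shows "A \<in> Sigma_inv_closure M \<phi>"
proof -
  have A: "A \<in> sets M"
    using pull_I[of 0] sets_pull[OF I] by metis
  have almost_inv: "ma_dist M (\<phi> -` C \<inter> space M) C = 0"
    using assms by (rule limit_of_pushforwards_almost_invariant)
  have "ma_dist M A C = 0"
  proof (rule ma_dist_eq_0_if_le_null_sequence[OF _ lim])
    fix n
    have "ma_dist M A C \<le> ma_dist M A (pull n C) + ma_dist M (pull n C) C"
      using A C sets_pull by (intro ma_dist_triangle)
    moreover have "ma_dist M A (pull n C) = ma_dist M (I n) C"
      using ma_dist_pull[OF I[of n] C, of n] pull_I[of n] by simp
    ultimately show "ma_dist M A C \<le> ma_dist M (I n) C"
      using ma_dist_pull_eq_0[OF C almost_inv, of n] by simp
  qed
  moreover obtain D where D: "D \<in> Sigma_inv M \<phi>" "ma_dist M C D = 0"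
    using almost_invariant_imp_ex_invariant[OF C almost_inv] by blast
  moreover have "D \<in> sets M"
    using D(1) by (simp add: Sigma_inv_def)
  ultimately have "ma_dist M A D = 0"
    using A C by (blast intro: ma_dist_eq_0_trans)
  then show ?thesis
    using A D(1) unfolding Sigma_inv_closure_def ma_dist_def by blast
qed

end

lemma mpds_imp_measure_preserving_map: "mpds M \<phi> \<Longrightarrow> measure_preserving_map M \<phi>"
  unfolding mpds_def measure_preserving_map_def measure_preserving_map_axioms_def
  by (auto simp: prob_space_def)

theorem lemma3p4:
  fixes M :: "'a measure" and \<phi> :: "'a \<Rightarrow> 'a"
  assumes "mpds M \<phi>"
    and "bimeasurable M \<phi>"
    and "\<forall>A\<in>sets M. converges_measure_algebra M (\<lambda>n. (\<phi> ^^ n) ` A)"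
  shows "Sigma_infty M \<phi> \<subseteq> Sigma_inv_closure M \<phi>"
proof
  interpret measure_preserving_map M \<phi>
    using assms(1) by (rule mpds_imp_measure_preserving_map)
  fix A assume A: "A \<in> Sigma_infty M \<phi>"
  then have A_sets: "A \<in> sets M"
    by (rule Sigma_infty_sets)
  obtain C where "C \<in> sets M" "(\<lambda>n. ma_dist M ((\<phi> ^^ n) ` A) C) \<longlonglongrightarrow> 0"
    using assms(3) A_sets by (auto simp: converges_measure_algebra_def ma_dist_def)
  then show "A \<in> Sigma_inv_closure M \<phi>"
    using sets_image_funpow[OF assms(2) A_sets] Sigma_infty_eq_pull_image[OF A]
    by (rule limit_of_pushforwards_Sigma_inv_closure[rotated 2])
qed

end
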